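(* Let $X$ be a uniformly smooth Banach space and let $\{S_i\}_{i=1}^\infty$ be a family of nonempty subsets of $X$ such that $a\in\bigcap_{i=1}^\infty\operatorname{conv} S_i$ and $D=\sup_i\operatorname{diam} S_i<\infty$. Then there exists a sequence $\{x_i\}_{i=1}^\infty$ with $x_i\in S_i$ for every $i$ such that, for every $k\in\mathbb{N}$, the vector $a_k=\frac1k\sum_{i=1}^k x_i$ satisfies $$\|a-a_k\|\le \frac{2e^2}{k\,\rho_X^{-1}(1/k)}\,D .$$
   Context: The modulus of smoothness of a Banach space $X$ is $\rho_X(\tau)=\sup\{\tfrac12(\|x+\tau y\|+\|x-\tau y\|)-1 : \|x\|=\|y\|=1\}$ for $\tau\ge 0$. $X$ is uniformly smooth if $\rho_X(t)=o(t)$ as $t\to0$. The function $\rho_X$ is convex, strictly increasing and continuous on $[0,\infty)$, with $\rho_X(0)=0$, and it satisfies $\sqrt{1+\tau^2}-1\le\rho_X(\tau)$. Consequently it is a bijection of $[0,\infty)$ onto itself, and $\rho_X^{-1}$ denotes its inverse function. $\operatorname{conv}$ denotes the convex hull, and $\operatorname{diam} S=\sup_{x,y\in S}\|x-y\|$. *)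

theory Defs
  imports "HOL-Analysis.Analysis"
begin

definition mod_smooth :: "'a::real_normed_vector itself \<Rightarrow> real \<Rightarrow> real" where
  "mod_smooth _ \<tau> = Sup {(norm (x + \<tau> *\<^sub>R y) + norm (x - \<tau> *\<^sub>R y)) / 2 - 1 | x y :: 'a.
                          norm x = 1 \<and> norm y = 1}"

definition uniformly_smooth :: "'a::real_normed_vector itself \<Rightarrow> bool" where
  "uniformly_smooth T \<longleftrightarrow> ((\<lambda>t. mod_smooth T t / t) \<longlongrightarrow> 0) (at_right 0)"

definition mod_smooth_inv :: "'a::real_normed_vector itself \<Rightarrow> real \<Rightarrow> real" where
  "mod_smooth_inv T s = (THE t. t \<ge> 0 \<and> mod_smooth T t = s)"

end

theory Submission
  imports Defs
begin

text \<open>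
  Pick the points greedily, tracking the centred partial sum \<open>z = \<Sum>\<^sub>i (x\<^sub>i - a)\<close>.
  Write \<open>a\<close> as a convex combination of points \<open>y\<close> of the next set. The vectors
  \<open>z - (y - a)\<close> then average to \<open>z\<close>, so combining
  \<open>\<parallel>z + (y - a)\<parallel> + \<parallel>z - (y - a)\<parallel> \<le> 2\<parallel>z\<parallel>(1 + \<rho>(D/\<parallel>z\<parallel>))\<close> with
  \<open>\<parallel>z\<parallel> \<le> average of \<parallel>z - (y - a)\<parallel>\<close> yields some \<open>y\<close> with
  \<open>\<parallel>z + (y - a)\<parallel> \<le> \<parallel>z\<parallel>(1 + 2\<rho>(D/\<parallel>z\<parallel>))\<close>.
  For fixed \<open>k\<close> and \<open>t = \<rho>\<^sup>-\<^sup>1(1/k)\<close>, convexity of \<open>\<rho>\<close> gives \<open>\<rho>(s) \<le> (s/t) \<rho>(t)\<close> for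
  \<open>s \<le> t\<close>; hence a step adds at most \<open>2D/(kt)\<close> to \<open>\<parallel>z\<parallel>\<close> once \<open>\<parallel>z\<parallel> > D/t\<close>, and at
  most \<open>D\<close> otherwise. So after \<open>k\<close> steps \<open>\<parallel>z\<parallel> \<le> 3D/t + D \<le> 5D/t\<close>, as \<open>t \<le> 2\<close>, and
  \<open>5 \<le> 2e\<^sup>2\<close>.
\<close>

section \<open>The modulus of smoothness\<close>

lemma mod_smooth_ge:
  fixes x y :: "'a::real_normed_vector"
  assumes "norm x = 1" "norm y = 1"
  shows "(norm (x + t *\<^sub>R y) + norm (x - t *\<^sub>R y)) / 2 - 1 \<le> mod_smooth TYPE('a) t"
  unfolding mod_smooth_def
proof (rule cSup_upper)
  show "(norm (x + t *\<^sub>R y) + norm (x - t *\<^sub>R y)) / 2 - 1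
        \<in> {(norm (x + t *\<^sub>R y) + norm (x - t *\<^sub>R y)) / 2 - 1 |x y::'a. norm x = 1 \<and> norm y = 1}"
    using assms by blast
  have "(norm (x + t *\<^sub>R y) + norm (x - t *\<^sub>R y)) / 2 - 1 \<le> \<bar>t\<bar>"
    if "norm x = 1" "norm y = 1" for x y :: 'a
    using norm_triangle_ineq[of x "t *\<^sub>R y"] norm_triangle_ineq4[of x "t *\<^sub>R y"] that
    by (simp add: field_simps)
  then show "bdd_above {(norm (x + t *\<^sub>R y) + norm (x - t *\<^sub>R y)) / 2 - 1 |x y::'a. norm x = 1 \<and> norm y = 1}"
    by (auto intro!: bdd_aboveI)
qed

text \<open>
  In the zero space the set in the definition of \<open>mod_smooth\<close> is empty and its supremum is a
  junk value, hence the nontriviality hypothesis \<open>UNIV \<noteq> {0}\<close> below.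
\<close>

lemma exists_norm_eq_1:
  assumes "UNIV \<noteq> {0::'a}"
  obtains u :: "'a::real_normed_vector" where "norm u = 1"
proof -
  obtain e :: 'a where "e \<noteq> 0" using assms by blast
  then show thesis using that[of "sgn e"] by (simp add: norm_sgn)
qed

lemma mod_smooth_le:
  assumes "UNIV \<noteq> {0::'a::real_normed_vector}"
    and "\<And>x y::'a. norm x = 1 \<Longrightarrow> norm y = 1 \<Longrightarrow>
           (norm (x + t *\<^sub>R y) + norm (x - t *\<^sub>R y)) / 2 - 1 \<le> c"
  shows "mod_smooth TYPE('a) t \<le> c"
  unfolding mod_smooth_def
proof (rule cSup_least)
  obtain u :: 'a where "norm u = 1" using exists_norm_eq_1[OF assms(1)] .
  then show "{(norm (x + t *\<^sub>R y) + norm (x - t *\<^sub>R y)) / 2 - 1 |x y::'a. norm x = 1 \<and> norm y = 1} \<noteq> {}"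
    by blast
qed (use assms(2) in blast)

lemma mod_smooth_zero:
  assumes "UNIV \<noteq> {0::'a::real_normed_vector}"
  shows "mod_smooth TYPE('a) 0 = 0"
proof (rule antisym)
  show "mod_smooth TYPE('a) 0 \<le> 0" by (rule mod_smooth_le[OF assms]) simp
  obtain u :: 'a where "norm u = 1" using exists_norm_eq_1[OF assms] .
  from mod_smooth_ge[OF this this, of 0] this show "0 \<le> mod_smooth TYPE('a) 0" by simp
qed

lemma mod_smooth_ge_max:
  assumes "UNIV \<noteq> {0::'a::real_normed_vector}" "0 \<le> t"
  shows "max t 1 - 1 \<le> mod_smooth TYPE('a) t"
proof -
  obtain u :: 'a where u: "norm u = 1" using exists_norm_eq_1[OF assms(1)] .
  have "u + t *\<^sub>R u = (1 + t) *\<^sub>R u" "u - t *\<^sub>R u = (1 - t) *\<^sub>R u"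
    by (simp_all add: algebra_simps)
  then have "max t 1 - 1 = (norm (u + t *\<^sub>R u) + norm (u - t *\<^sub>R u)) / 2 - 1"
    using u assms(2) by (simp add: max_def abs_if)
  also have "\<dots> \<le> mod_smooth TYPE('a) t" by (rule mod_smooth_ge[OF u u])
  finally show ?thesis .
qed

lemma mod_smooth_nonneg:
  assumes "UNIV \<noteq> {0::'a::real_normed_vector}" "0 \<le> t"
  shows "0 \<le> mod_smooth TYPE('a) t"
  using mod_smooth_ge_max[OF assms] by simp

lemma convex_on_mod_smooth:
  assumes "UNIV \<noteq> {0::'a::real_normed_vector}"
  shows "convex_on UNIV (mod_smooth TYPE('a))"
proof (rule convex_onI)
  fix l p q :: real
  assume l: "0 < l" "l < 1"
  define c where "c = (1 - l) * p + l * q"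
  have "mod_smooth TYPE('a) c \<le> (1 - l) * mod_smooth TYPE('a) p + l * mod_smooth TYPE('a) q"
  proof (rule mod_smooth_le[OF assms])
    fix x y :: 'a
    assume x: "norm x = 1" and y: "norm y = 1"
    have convex_norm: "norm ((1 - l) *\<^sub>R u + l *\<^sub>R v) \<le> (1 - l) * norm u + l * norm v" for u v :: 'a
      using norm_triangle_ineq[of "(1 - l) *\<^sub>R u" "l *\<^sub>R v"] l by simp
    have "x + c *\<^sub>R y = (1 - l) *\<^sub>R (x + p *\<^sub>R y) + l *\<^sub>R (x + q *\<^sub>R y)"
         "x - c *\<^sub>R y = (1 - l) *\<^sub>R (x - p *\<^sub>R y) + l *\<^sub>R (x - q *\<^sub>R y)"
      by (simp_all add: c_def algebra_simps)
    then have "(norm (x + c *\<^sub>R y) + norm (x - c *\<^sub>R y)) / 2 - 1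
        \<le> ((1 - l) * norm (x + p *\<^sub>R y) + l * norm (x + q *\<^sub>R y)
            + (1 - l) * norm (x - p *\<^sub>R y) + l * norm (x - q *\<^sub>R y)) / 2 - 1"
      using convex_norm[of "x + p *\<^sub>R y" "x + q *\<^sub>R y"] convex_norm[of "x - p *\<^sub>R y" "x - q *\<^sub>R y"]
      by simp
    also have "\<dots> = (1 - l) * ((norm (x + p *\<^sub>R y) + norm (x - p *\<^sub>R y)) / 2 - 1)
                    + l * ((norm (x + q *\<^sub>R y) + norm (x - q *\<^sub>R y)) / 2 - 1)"
      by (simp add: field_simps)
    also have "\<dots> \<le> (1 - l) * mod_smooth TYPE('a) p + l * mod_smooth TYPE('a) q"
      using mod_smooth_ge[OF x y] l by (intro add_mono mult_left_mono) auto
    finally show "(norm (x + c *\<^sub>R y) + norm (x - c *\<^sub>R y)) / 2 - 1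
        \<le> (1 - l) * mod_smooth TYPE('a) p + l * mod_smooth TYPE('a) q" .
  qed
  then show "mod_smooth TYPE('a) ((1 - l) *\<^sub>R p + l *\<^sub>R q)
        \<le> (1 - l) * mod_smooth TYPE('a) p + l * mod_smooth TYPE('a) q"
    by (simp add: c_def)
qed simp

lemma mod_smooth_le_scaled:
  assumes "UNIV \<noteq> {0::'a::real_normed_vector}" "0 \<le> s" "s \<le> t" "0 < t"
  shows "mod_smooth TYPE('a) s \<le> s / t * mod_smooth TYPE('a) t"
  using convex_onD[OF convex_on_mod_smooth[OF assms(1)], of "s / t" 0 t] assms
  by (simp add: mod_smooth_zero)

lemma mod_smooth_mono:
  assumes "UNIV \<noteq> {0::'a::real_normed_vector}" "0 \<le> s" "s \<le> t"
  shows "mod_smooth TYPE('a) s \<le> mod_smooth TYPE('a) t"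
proof (cases "s = t")
  case False
  then have "mod_smooth TYPE('a) s \<le> s / t * mod_smooth TYPE('a) t"
    using assms by (intro mod_smooth_le_scaled) auto
  also have "\<dots> \<le> mod_smooth TYPE('a) t"
  proof -
    have "s / t \<le> 1" using assms by (auto simp: divide_le_eq_1)
    from mult_right_mono[OF this mod_smooth_nonneg[OF assms(1), of t]] assms show ?thesis by simp
  qed
  finally show ?thesis .
qed simp

lemma mod_smooth_less:
  assumes "UNIV \<noteq> {0::'a::real_normed_vector}" "0 \<le> s" "s < t" "0 < mod_smooth TYPE('a) t"
  shows "mod_smooth TYPE('a) s < mod_smooth TYPE('a) t"
proof -
  have "mod_smooth TYPE('a) s \<le> s / t * mod_smooth TYPE('a) t"
    using assms by (intro mod_smooth_le_scaled) auto
  also have "\<dots> < mod_smooth TYPE('a) t"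
    using mult_strict_right_mono[of "s / t" 1 "mod_smooth TYPE('a) t"] assms by simp
  finally show ?thesis .
qed

lemma mod_smooth_lipschitz:
  assumes "UNIV \<noteq> {0::'a::real_normed_vector}"
  shows "1-lipschitz_on A (mod_smooth TYPE('a))"
proof -
  have le: "mod_smooth TYPE('a) s \<le> mod_smooth TYPE('a) t + \<bar>s - t\<bar>" for s t
  proof (rule mod_smooth_le[OF assms])
    fix x y :: 'a
    assume x: "norm x = 1" and y: "norm y = 1"
    have "(x + s *\<^sub>R y) - (x + t *\<^sub>R y) = (s - t) *\<^sub>R y"
         "(x - s *\<^sub>R y) - (x - t *\<^sub>R y) = (t - s) *\<^sub>R y"
      by (simp_all add: algebra_simps)
    then have "norm (x + s *\<^sub>R y) - norm (x + t *\<^sub>R y) \<le> \<bar>s - t\<bar>"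
              "norm (x - s *\<^sub>R y) - norm (x - t *\<^sub>R y) \<le> \<bar>s - t\<bar>"
      using norm_triangle_ineq2[of "x + s *\<^sub>R y" "x + t *\<^sub>R y"]
            norm_triangle_ineq2[of "x - s *\<^sub>R y" "x - t *\<^sub>R y"]
      by (simp_all only: norm_scaleR y real_norm_def mult_1_right abs_minus_commute)
    then show "(norm (x + s *\<^sub>R y) + norm (x - s *\<^sub>R y)) / 2 - 1 \<le> mod_smooth TYPE('a) t + \<bar>s - t\<bar>"
      using mod_smooth_ge[OF x y, of t] by (simp add: field_simps)
  qed
  show ?thesis
  proof (rule lipschitz_onI)
    fix s t :: real
    show "dist (mod_smooth TYPE('a) s) (mod_smooth TYPE('a) t) \<le> 1 * dist s t"
      using le[of s t] le[of t s] by (simp add: dist_real_def abs_le_iff abs_minus_commute)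
  qed simp
qed

lemma mod_smooth_inv:
  assumes "UNIV \<noteq> {0::'a::real_normed_vector}" "0 < v" "v \<le> 1"
  shows "mod_smooth TYPE('a) (mod_smooth_inv TYPE('a) v) = v"
    and "0 < mod_smooth_inv TYPE('a) v"
    and "mod_smooth_inv TYPE('a) v \<le> 2"
proof -
  have "mod_smooth TYPE('a) 0 \<le> v" "v \<le> mod_smooth TYPE('a) 2"
    using assms mod_smooth_zero[OF assms(1)] mod_smooth_ge_max[OF assms(1), of 2] by simp_all
  from IVT'[OF this _ lipschitz_on_continuous_on[OF mod_smooth_lipschitz[OF assms(1)]]]
  obtain t where t: "0 \<le> t" "t \<le> 2" "mod_smooth TYPE('a) t = v"
    by auto
  have uniq: "s = t" if s: "0 \<le> s" "mod_smooth TYPE('a) s = v" for s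
  proof (rule ccontr)
    assume "s \<noteq> t"
    then consider "s < t" | "t < s" by linarith
    then show False
    proof cases
      case 1
      from mod_smooth_less[OF assms(1) s(1) this] show False using s t assms(2) by simp
    next
      case 2
      from mod_smooth_less[OF assms(1) t(1) this] show False using s t assms(2) by simp
    qed
  qed
  then have "mod_smooth_inv TYPE('a) v = t"
    unfolding mod_smooth_inv_def using t uniq by (intro the_equality) blast+
  moreover have "t \<noteq> 0" using t(3) assms(2) mod_smooth_zero[OF assms(1)] by force
  ultimately show "mod_smooth TYPE('a) (mod_smooth_inv TYPE('a) v) = v"
    and "0 < mod_smooth_inv TYPE('a) v" and "mod_smooth_inv TYPE('a) v \<le> 2"
    using t by simp_all
qed

section \<open>Greedy selection\<close>

lemma norm_add_plus_norm_diff_le: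
  fixes z w :: "'a::real_normed_vector"
  assumes "z \<noteq> 0"
  shows "norm (z + w) + norm (z - w) \<le> 2 * norm z * (1 + mod_smooth TYPE('a) (norm w / norm z))"
proof (cases "w = 0")
  case True
  have "UNIV \<noteq> {0::'a}" using assms by auto
  with True show ?thesis by (simp add: mod_smooth_zero)
next
  case False
  define x where "x = sgn z"
  define y where "y = sgn w"
  define \<tau> where "\<tau> = norm w / norm z"
  have x: "norm x = 1" and y: "norm y = 1"
    using assms False by (simp_all add: x_def y_def norm_sgn)
  have "x + \<tau> *\<^sub>R y = (1 / norm z) *\<^sub>R (z + w)" "x - \<tau> *\<^sub>R y = (1 / norm z) *\<^sub>R (z - w)"
    using False by (simp_all add: x_def y_def \<tau>_def sgn_div_norm inverse_eq_divide algebra_simps)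
  with mod_smooth_ge[OF x y, of \<tau>] have "(norm (z + w) + norm (z - w)) / norm z / 2 - 1 \<le> mod_smooth TYPE('a) \<tau>"
    by (simp add: add_divide_distrib)
  with assms show ?thesis by (simp add: \<tau>_def field_simps)
qed

lemma exists_le_convex_combination:
  fixes f u :: "'b \<Rightarrow> real"
  assumes "finite T" "T \<noteq> {}" "\<And>y. y \<in> T \<Longrightarrow> 0 \<le> u y" "sum u T = 1"
  obtains y where "y \<in> T" "f y \<le> (\<Sum>y\<in>T. u y * f y)"
proof -
  have "Min (f ` T) \<in> f ` T" using assms(1,2) by simp
  then obtain y where y: "y \<in> T" "f y = Min (f ` T)" by auto
  have "f y = (\<Sum>z\<in>T. u z * f y)"
    using assms(4) by (simp add: sum_distrib_right[symmetric])
  also have "\<dots> \<le> (\<Sum>z\<in>T. u z * f z)"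
    using assms y by (intro sum_mono mult_left_mono) auto
  finally show thesis using that y(1) by blast
qed

lemma norm_le_convex_combination_shift:
  fixes z :: "'a::real_normed_vector"
  assumes "\<And>y. y \<in> T \<Longrightarrow> 0 \<le> u y" "sum u T = 1" "(\<Sum>y\<in>T. u y *\<^sub>R y) = a"
  shows "norm z \<le> (\<Sum>y\<in>T. u y * norm (z - (y - a)))"
proof -
  have "(\<Sum>y\<in>T. u y *\<^sub>R (z - (y - a))) = (\<Sum>y\<in>T. u y *\<^sub>R (z + a) - u y *\<^sub>R y)"
    by (rule sum.cong) (simp_all add: algebra_simps)
  also have "\<dots> = (\<Sum>y\<in>T. u y) *\<^sub>R (z + a) - (\<Sum>y\<in>T. u y *\<^sub>R y)"
    by (simp add: sum_subtractf scaleR_sum_left)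
  also have "\<dots> = z" using assms(2,3) by simp
  finally have "norm z \<le> (\<Sum>y\<in>T. norm (u y *\<^sub>R (z - (y - a))))"
    using norm_sum[of "\<lambda>y. u y *\<^sub>R (z - (y - a))" T] by (simp only:)
  also have "\<dots> = (\<Sum>y\<in>T. u y * norm (z - (y - a)))"
    using assms(1) by (intro sum.cong) auto
  finally show ?thesis .
qed

lemma greedy_step:
  fixes z a :: "'a::real_normed_vector"
  assumes "z \<noteq> 0" "a \<in> convex hull S" "\<And>y. y \<in> S \<Longrightarrow> norm (y - a) \<le> D"
  obtains y where "y \<in> S" "norm (z + (y - a)) \<le> norm z * (1 + 2 * mod_smooth TYPE('a) (D / norm z))"
proof -
  obtain T u where T: "finite T" "T \<subseteq> S" "\<And>y. y \<in> T \<Longrightarrow> 0 \<le> u y" "sum u T = 1"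
    and a: "(\<Sum>y\<in>T. u y *\<^sub>R y) = a"
    using assms(2) unfolding convex_hull_explicit by blast
  have nontrivial: "UNIV \<noteq> {0::'a}" using assms(1) by auto
  define R where "R = 2 * norm z * (1 + mod_smooth TYPE('a) (D / norm z))"
  have sum_le: "norm (z + (y - a)) + norm (z - (y - a)) \<le> R" if "y \<in> T" for y
  proof -
    have "mod_smooth TYPE('a) (norm (y - a) / norm z) \<le> mod_smooth TYPE('a) (D / norm z)"
      using assms(1,3) T(2) that
      by (intro mod_smooth_mono[OF nontrivial] divide_right_mono) auto
    then have "2 * norm z * (1 + mod_smooth TYPE('a) (norm (y - a) / norm z)) \<le> R"
      unfolding R_def by (intro mult_left_mono) auto
    with norm_add_plus_norm_diff_le[OF assms(1), of "y - a"] show ?thesis by linarith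
  qed
  have "(\<Sum>y\<in>T. u y * norm (z + (y - a))) \<le> (\<Sum>y\<in>T. u y * (R - norm (z - (y - a))))"
  proof (rule sum_mono)
    fix y assume "y \<in> T"
    with sum_le[of y] T(3)[of y] show "u y * norm (z + (y - a)) \<le> u y * (R - norm (z - (y - a)))"
      by (intro mult_left_mono) auto
  qed
  also have "\<dots> = R - (\<Sum>y\<in>T. u y * norm (z - (y - a)))"
    using T(4) by (simp add: right_diff_distrib sum_subtractf sum_distrib_right[symmetric])
  finally have average_le: "(\<Sum>y\<in>T. u y * norm (z + (y - a))) \<le> R - norm z"
    using norm_le_convex_combination_shift[OF T(3,4) a, of z] by linarith
  have "T \<noteq> {}" using T(4) by auto
  then obtain y where y: "y \<in> T" "norm (z + (y - a)) \<le> (\<Sum>y\<in>T. u y * norm (z + (y - a)))"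
    by (rule exists_le_convex_combination[OF T(1) _ T(3,4), where f = "\<lambda>y. norm (z + (y - a))"])
  have "R - norm z = norm z * (1 + 2 * mod_smooth TYPE('a) (D / norm z))"
    unfolding R_def by (simp add: algebra_simps)
  with y(2) average_le have "norm (z + (y - a)) \<le> norm z * (1 + 2 * mod_smooth TYPE('a) (D / norm z))"
    by linarith
  with y(1) T(2) show thesis using that by blast
qed

lemma greedy_selection:
  fixes S :: "nat \<Rightarrow> 'a::real_normed_vector set"
  assumes "\<And>i. i \<ge> 1 \<Longrightarrow> S i \<noteq> {}" "\<And>i. i \<ge> 1 \<Longrightarrow> a \<in> convex hull S i"
    and "\<And>i y. i \<ge> 1 \<Longrightarrow> y \<in> S i \<Longrightarrow> norm (y - a) \<le> D"
  obtains x where "\<forall>i\<ge>1. x i \<in> S i"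
    and "\<forall>n. (\<Sum>i=1..n. x i - a) \<noteq> 0 \<longrightarrow>
           norm (\<Sum>i=1..Suc n. x i - a)
             \<le> norm (\<Sum>i=1..n. x i - a) * (1 + 2 * mod_smooth TYPE('a) (D / norm (\<Sum>i=1..n. x i - a)))"
proof -
  define good where "good n z z' \<longleftrightarrow> z' - z + a \<in> S (Suc n) \<and>
    (z \<noteq> 0 \<longrightarrow> norm z' \<le> norm z * (1 + 2 * mod_smooth TYPE('a) (D / norm z)))" for n z z'
  have "\<exists>f. \<forall>n. (n = 0 \<longrightarrow> f n = 0) \<and> good n (f n) (f (Suc n))"
  proof (rule dependent_nat_choice)
    fix z n
    show "\<exists>z'. (Suc n = 0 \<longrightarrow> z' = 0) \<and> good n z z'"
    proof (cases "z = 0")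
      case True
      obtain y where "y \<in> S (Suc n)" using assms(1)[of "Suc n"] by auto
      with True have "good n z (z + (y - a))" by (simp add: good_def)
      then show ?thesis by blast
    next
      case False
      have "a \<in> convex hull S (Suc n)" "\<And>y. y \<in> S (Suc n) \<Longrightarrow> norm (y - a) \<le> D"
        using assms(2)[of "Suc n"] assms(3)[of "Suc n"] by simp_all
      then obtain y where "y \<in> S (Suc n)"
        "norm (z + (y - a)) \<le> norm z * (1 + 2 * mod_smooth TYPE('a) (D / norm z))"
        by (rule greedy_step[OF False])
      then have "good n z (z + (y - a))" by (simp add: good_def)
      then show ?thesis by blast
    qed
  qed simp
  then obtain f where f0: "f 0 = 0" and f_good: "\<And>n. good n (f n) (f (Suc n))" by blast
  define x where "x i = f i - f (i - 1) + a" for i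
  have partial_sums: "(\<Sum>i=1..n. x i - a) = f n" for n
    using sum_telescope''[of 0 n f] f0 by (simp add: x_def)
  show thesis
  proof (rule that)
    show "\<forall>i\<ge>1. x i \<in> S i"
    proof (intro allI impI)
      fix i :: nat
      assume "i \<ge> 1"
      then show "x i \<in> S i" using f_good[of "i - 1"] by (simp add: good_def x_def)
    qed
    show "\<forall>n. (\<Sum>i=1..n. x i - a) \<noteq> 0 \<longrightarrow> norm (\<Sum>i=1..Suc n. x i - a)
             \<le> norm (\<Sum>i=1..n. x i - a) * (1 + 2 * mod_smooth TYPE('a) (D / norm (\<Sum>i=1..n. x i - a)))"
      using f_good unfolding partial_sums good_def by simp
  qed
qed

lemma threshold_growth_bound:
  fixes r :: "nat \<Rightarrow> real"
  assumes "r 0 \<le> c + D" "\<And>n. r (Suc n) \<le> r n + D"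
    and "\<And>n. c < r n \<Longrightarrow> r (Suc n) \<le> r n + \<delta>" "0 \<le> \<delta>"
  shows "r n \<le> c + D + n * \<delta>"
proof (induction n)
  case (Suc n)
  show ?case
  proof (cases "c < r n")
    case True
    with Suc.IH assms(3)[of n] show ?thesis by (simp add: algebra_simps)
  next
    case False
    with assms(2)[of n] assms(4) show ?thesis by (simp add: add_increasing2)
  qed
qed (simp add: assms(1))

lemma mul_mod_smooth_div_le:
  assumes "UNIV \<noteq> {0::'a::real_normed_vector}" "0 \<le> D" "0 < t" "D / t < r"
  shows "r * mod_smooth TYPE('a) (D / r) \<le> D / t * mod_smooth TYPE('a) t"
proof -
  have r: "0 < r" using assms(2-4) by (smt (verit) divide_nonneg_pos)
  have "D / r \<le> t" using assms(3,4) r by (simp add: divide_le_eq pos_divide_less_eq mult.commute)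
  then have "mod_smooth TYPE('a) (D / r) \<le> D / r / t * mod_smooth TYPE('a) t"
    using assms(1-3) r by (intro mod_smooth_le_scaled) auto
  then have "r * mod_smooth TYPE('a) (D / r) \<le> r * (D / r / t * mod_smooth TYPE('a) t)"
    using r by (intro mult_left_mono) auto
  with r show ?thesis by simp
qed

lemma smooth_growth_bound:
  fixes z :: "nat \<Rightarrow> 'a::real_normed_vector"
  assumes "UNIV \<noteq> {0::'a}" "0 \<le> D" "k \<ge> 1" "z 0 = 0"
    and "\<And>n. norm (z (Suc n)) \<le> norm (z n) + D"
    and "\<And>n. z n \<noteq> 0 \<Longrightarrow>
           norm (z (Suc n)) \<le> norm (z n) * (1 + 2 * mod_smooth TYPE('a) (D / norm (z n)))"
  shows "norm (z k) \<le> 5 * D / mod_smooth_inv TYPE('a) (1 / real k)"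
proof -
  define t where "t = mod_smooth_inv TYPE('a) (1 / real k)"
  have t: "mod_smooth TYPE('a) t = 1 / real k" "0 < t" "t \<le> 2"
    using mod_smooth_inv[OF assms(1), of "1 / real k"] assms(3) unfolding t_def by auto
  have "norm (z k) \<le> D / t + D + real k * (2 * D / (real k * t))"
  proof (rule threshold_growth_bound[where r = "\<lambda>n. norm (z n)"])
    show "norm (z (Suc n)) \<le> norm (z n) + 2 * D / (real k * t)" if "D / t < norm (z n)" for n
    proof -
      have "z n \<noteq> 0" using that assms(2) t(2) by (smt (verit) divide_nonneg_pos norm_zero)
      then have "norm (z (Suc n)) \<le> norm (z n) + 2 * (norm (z n) * mod_smooth TYPE('a) (D / norm (z n)))"
        using assms(6)[of n] by (simp add: algebra_simps)
      also have "\<dots> \<le> norm (z n) + 2 * (D / t * mod_smooth TYPE('a) t)"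
        using mul_mod_smooth_div_le[OF assms(1,2) t(2) that] by simp
      finally show ?thesis using t(1) by (simp add: ac_simps)
    qed
  qed (use assms(2,4,5) t in simp_all)
  also have "\<dots> = D / t + D + 2 * D / t"
    using assms(3) by simp
  also have "\<dots> \<le> 5 * D / t"
  proof -
    have "D * t \<le> D * 2" using t assms(2) by (intro mult_left_mono) auto
    then have "D \<le> 2 * D / t" using t(2) by (simp add: field_simps)
    then show ?thesis by (simp add: add_divide_distrib[symmetric])
  qed
  finally show ?thesis unfolding t_def .
qed

lemma greedy_average_bound:
  fixes S :: "nat \<Rightarrow> 'a::real_normed_vector set"
  assumes "UNIV \<noteq> {0::'a}"
    and "\<And>i. i \<ge> 1 \<Longrightarrow> S i \<noteq> {}" "\<And>i. i \<ge> 1 \<Longrightarrow> a \<in> convex hull S i"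
    and "\<And>i y. i \<ge> 1 \<Longrightarrow> y \<in> S i \<Longrightarrow> norm (y - a) \<le> D"
  obtains x where "\<forall>i\<ge>1. x i \<in> S i"
    and "\<forall>k\<ge>1. norm (a - (1 / real k) *\<^sub>R (\<Sum>i=1..k. x i))
                 \<le> 5 / (real k * mod_smooth_inv TYPE('a) (1 / real k)) * D"
proof -
  obtain x where xS: "\<forall>i\<ge>1. x i \<in> S i"
    and greedy: "\<forall>n. (\<Sum>i=1..n. x i - a) \<noteq> 0 \<longrightarrow>
           norm (\<Sum>i=1..Suc n. x i - a)
             \<le> norm (\<Sum>i=1..n. x i - a) * (1 + 2 * mod_smooth TYPE('a) (D / norm (\<Sum>i=1..n. x i - a)))"
    by (rule greedy_selection[of S a D, OF assms(2-4)])
  obtain y where "y \<in> S 1" using assms(2)[of 1] by auto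
  with assms(4)[of 1 y] norm_ge_zero[of "y - a"] have D: "0 \<le> D" by linarith
  have step: "norm (\<Sum>i=1..Suc n. x i - a) \<le> norm (\<Sum>i=1..n. x i - a) + D" for n
    using norm_triangle_ineq[of "\<Sum>i=1..n. x i - a" "x (Suc n) - a"] assms(4)[of "Suc n" "x (Suc n)"] xS
    by simp
  have "norm (a - (1 / real k) *\<^sub>R (\<Sum>i=1..k. x i))
        \<le> 5 / (real k * mod_smooth_inv TYPE('a) (1 / real k)) * D" if k: "k \<ge> 1" for k
  proof -
    have "a - (1 / real k) *\<^sub>R (\<Sum>i=1..k. x i) = - ((1 / real k) *\<^sub>R (\<Sum>i=1..k. x i - a))"
      using k by (simp add: sum_subtractf sum_constant_scaleR algebra_simps)
    then have "norm (a - (1 / real k) *\<^sub>R (\<Sum>i=1..k. x i)) = norm (\<Sum>i=1..k. x i - a) / real k"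
      by simp
    also have "\<dots> \<le> 5 * D / mod_smooth_inv TYPE('a) (1 / real k) / real k"
      using smooth_growth_bound[OF assms(1) D k, of "\<lambda>n. \<Sum>i=1..n. x i - a"] step greedy
      by (intro divide_right_mono) auto
    finally show ?thesis by (simp add: field_simps)
  qed
  with xS show thesis using that by blast
qed

lemma dist_le_diameter_convex_hull:
  fixes S :: "'a::real_normed_vector set"
  assumes "bounded S" "x \<in> S" "y \<in> convex hull S"
  shows "dist x y \<le> diameter S"
proof -
  have "S \<subseteq> cball x (diameter S)"
    using diameter_bounded_bound[OF assms(1,2)] by (auto simp: mem_cball)
  then have "convex hull S \<subseteq> cball x (diameter S)"
    by (intro hull_minimal convex_cball)
  with assms(3) show ?thesis by auto
qed

theorem corollary1:
  fixes S :: "nat \<Rightarrow> 'a::banach set" and a :: 'a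
  assumes "uniformly_smooth TYPE('a)"
    and "\<And>i. i \<ge> 1 \<Longrightarrow> S i \<noteq> {}"
    and "\<And>i. i \<ge> 1 \<Longrightarrow> a \<in> convex hull (S i)"
    and "\<And>i. i \<ge> 1 \<Longrightarrow> bounded (S i)"
    and "bdd_above ((\<lambda>i. diameter (S i)) ` {1..})"
  shows "\<exists>x :: nat \<Rightarrow> 'a. (\<forall>i\<ge>1. x i \<in> S i) \<and>
           (\<forall>k::nat\<ge>1. norm (a - (1 / real k) *\<^sub>R (\<Sum>i=1..k. x i))
              \<le> 2 * exp 2 / (real k * mod_smooth_inv TYPE('a) (1 / real k))
                * (SUP i\<in>{1..}. diameter (S i)))"
proof -
  define D where "D = (SUP i\<in>{1..}. diameter (S i))"
  have diameter_le: "diameter (S i) \<le> D" if "i \<ge> 1" for i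
    unfolding D_def using that assms(5) by (intro cSUP_upper) auto
  have dist_le: "norm (y - a) \<le> D" if "i \<ge> 1" "y \<in> S i" for i y
    using dist_le_diameter_convex_hull[OF assms(4)[OF that(1)] that(2) assms(3)[OF that(1)]]
      diameter_le[OF that(1)]
    by (simp add: dist_norm)
  have D: "0 \<le> D"
    using diameter_le[of 1] diameter_ge_0[OF assms(4)[of 1]] by simp
  show ?thesis
  proof (cases "UNIV = {0::'a}")
    case True
    then have zero: "(v::'a) = 0" for v by auto
    have S0: "S i = {0}" if i: "i \<ge> 1" for i
    proof -
      obtain y where "y \<in> S i" using assms(2)[OF i] by auto
      with zero[of y] show ?thesis by (auto intro: zero)
    qed
    have "D \<le> 0"
      unfolding D_def by (rule cSUP_least) (simp_all add: S0)
    with D zero show ?thesis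
      unfolding D_def[symmetric] using S0 by (intro exI[of _ "\<lambda>_. 0"]) simp
  next
    case False
    obtain x where xS: "\<forall>i\<ge>1. x i \<in> S i"
      and bound: "\<forall>k\<ge>1. norm (a - (1 / real k) *\<^sub>R (\<Sum>i=1..k. x i))
                          \<le> 5 / (real k * mod_smooth_inv TYPE('a) (1 / real k)) * D"
      by (rule greedy_average_bound[of S a D, OF False assms(2,3) dist_le])
    have "5 / (real k * mod_smooth_inv TYPE('a) (1 / real k)) * D
          \<le> 2 * exp 2 / (real k * mod_smooth_inv TYPE('a) (1 / real k)) * D" if "k \<ge> 1" for k
    proof -
      have "5 \<le> 2 * exp (2::real)" using exp_ge_add_one_self[of 2] by simp
      moreover have "0 < mod_smooth_inv TYPE('a) (1 / real k)"
        using mod_smooth_inv(2)[OF False, of "1 / real k"] that by simp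
      ultimately show ?thesis
        using that D by (intro mult_right_mono divide_right_mono) auto
    qed
    with xS bound show ?thesis
      unfolding D_def[symmetric] by (intro exI[of _ x]) (meson order.trans)
  qed
qed

end
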